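(* Fix $x\in\mathbb{R}^n$ (deterministic) and let $A$ follow the stochastic block model described in the context. Then for every $k\in[K]$, $$\lambda_{\min}\big(\mathbb{E}(H_k)\big)\ \ge\ \min_{k'\in[K]} B_{k',k}(1-B_{k',k})(n_k-1)\,\|x^{(k')}\|_2^2,$$ where the expectation is over $A$.
   Context: Let $n\ge2$, $K\ge1$, $Z\in\{0,1\}^{n\times K}$ a community membership matrix (each row has exactly one $1$), $\psi_i$ the community of node $i$, $n_k=\sum_i Z_{i,k}\ge1$. Stochastic block model: $B\in[0,1]^{K\times K}$ symmetric, $P=ZBZ^\top$; the entries $\{A_{i,j}\}_{i<j}$ are independent Bernoulli$(P_{i,j})$ random variables, $A_{j,i}=A_{i,j}$, and $A_{i,i}=1$ for all $i$ (deterministic self-loops). $*$ is the Hadamard product, $1_n$ the all-ones vector. $M_k=\mathrm{diag}(Z_{\cdot,k})(1_n x^\top * A)Z\in\mathbb{R}^{n\times K}$, $H_k=M_k^\top M_k$, and $x^{(k')}=Z_{\cdot,k'}*x$ (the entries of $x$ in community $k'$, zero elsewhere). $\lambda_{\min}$ denotes smallest eigenvalue. *)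

theory Defs
  imports "HOL-Analysis.Analysis" "HOL-Probability.Probability"
begin

definition memb_mat :: "('n::finite \<Rightarrow> 'k::finite) \<Rightarrow> real^'k^'n" where
  "memb_mat psi = (\<chi> i k. if psi i = k then 1 else 0)"

definition comm_size :: "('n::finite \<Rightarrow> 'k) \<Rightarrow> 'k \<Rightarrow> nat" where
  "comm_size psi k = card {i. psi i = k}"

definition sbm_P :: "('n::finite \<Rightarrow> 'k::finite) \<Rightarrow> real^'k^'k \<Rightarrow> real^'n^'n" where
  "sbm_P psi B = memb_mat psi ** B ** transpose (memb_mat psi)"

definition sbm_edges :: "('n::{finite,linorder} \<Rightarrow> 'k::finite) \<Rightarrow> (real, 'k) vec^'k \<Rightarrow> ('n \<times> 'n \<Rightarrow> bool) pmf" where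
  "sbm_edges psi B = Pi_pmf {(i, j). i < j} False (\<lambda>(i, j). bernoulli_pmf (sbm_P psi B $ i $ j))"

definition adj_of :: "('n::{finite,linorder} \<times> 'n \<Rightarrow> bool) \<Rightarrow> ((real, 'n) vec, 'n) vec" where
  "adj_of e = (\<chi> i j. if i = j then 1 else if i < j then (if e (i, j) then 1 else 0)
                      else (if e (j, i) then 1 else 0))"

definition diag_vec :: "real^'n \<Rightarrow> real^'n^'n" where
  "diag_vec v = (\<chi> i j. if i = j then v $ i else 0)"

definition hadamard :: "real^'m^'n \<Rightarrow> real^'m^'n \<Rightarrow> real^'m^'n" where
  "hadamard U V = (\<chi> i j. U $ i $ j * V $ i $ j)"

definition ones_outer :: "real^'n \<Rightarrow> real^'n^'n" where
  "ones_outer x = (\<chi> i j. x $ j)"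

definition M_mat :: "('n::finite \<Rightarrow> 'k::finite) \<Rightarrow> real^'n \<Rightarrow> real^'n^'n \<Rightarrow> 'k \<Rightarrow> real^'k^'n" where
  "M_mat psi x A k = diag_vec (column k (memb_mat psi)) ** hadamard (ones_outer x) A ** memb_mat psi"

definition H_mat :: "('n::finite \<Rightarrow> 'k::finite) \<Rightarrow> real^'n \<Rightarrow> real^'n^'n \<Rightarrow> 'k \<Rightarrow> real^'k^'k" where
  "H_mat psi x A k = transpose (M_mat psi x A k) ** M_mat psi x A k"

definition mat_expectation :: "'a pmf \<Rightarrow> ('a \<Rightarrow> real^'m^'l) \<Rightarrow> real^'m^'l" where
  "mat_expectation p F = (\<chi> a b. measure_pmf.expectation p (\<lambda>\<omega>. F \<omega> $ a $ b))"

definition is_eigenvalue :: "real^'k^'k \<Rightarrow> real \<Rightarrow> bool" where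
  "is_eigenvalue C \<mu> \<longleftrightarrow> (\<exists>v. v \<noteq> 0 \<and> C *v v = \<mu> *\<^sub>R v)"

definition lambda_min :: "real^'k^'k \<Rightarrow> real" where
  "lambda_min C = Min {\<mu>. is_eigenvalue C \<mu>}"

definition comm_restrict :: "('n::finite \<Rightarrow> 'k) \<Rightarrow> 'k \<Rightarrow> real^'n \<Rightarrow> real^'n" where
  "comm_restrict psi k' x = (\<chi> i. (if psi i = k' then 1 else 0) * x $ i)"

end

theory Submission
  imports Defs
begin

(*
  For v \<noteq> 0, v' E[H_k] v = sum_i E[(M_k v)_i^2], and for a node i of community k the entry
  (M_k v)_i = sum_j x_j v_(psi j) A_ij is an affine function of the independent Bernoulli
  indicators of the edges at i. Its second moment is therefore at least its variance
  sum_(j \<noteq> i) (x_j v_(psi j))^2 B_(psi j,k) (1 - B_(psi j,k)). Summing over the n_k nodes of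
  community k counts every j at least n_k - 1 times, and grouping the j by community yields
  sum_k' v_k'^2 B_k'k (1 - B_k'k) (n_k - 1) |x^(k')|^2, which is at least the claimed minimum
  times |v|^2. Since E[H_k] is symmetric it has finitely many eigenvalues and at least one, and
  each of them is a Rayleigh quotient, so the bound passes to lambda_min.
*)

lemma symmetric_matrix_inner_commute:
  fixes C :: "real^'k^'k"
  assumes "transpose C = C"
  shows "v \<bullet> (C *v w) = (C *v v) \<bullet> w"
  by (metis assms dot_lmul_matrix transpose_matrix_vector)

lemma finite_eigenvalues_symmetric:
  fixes C :: "real^'k^'k"
  assumes sym: "transpose C = C"
  shows "finite {\<mu>. is_eigenvalue C \<mu>}"
proof -
  define S where "S = {\<mu>. is_eigenvalue C \<mu>}"
  define ev where "ev \<mu> = (SOME v. v \<noteq> 0 \<and> C *v v = \<mu> *\<^sub>R v)" for \<mu>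
  have ev: "ev \<mu> \<noteq> 0 \<and> C *v ev \<mu> = \<mu> *\<^sub>R ev \<mu>" if "\<mu> \<in> S" for \<mu>
    using that unfolding S_def is_eigenvalue_def ev_def
    by (metis (mono_tags, lifting) mem_Collect_eq someI_ex)
  have orth: "ev \<mu> \<bullet> ev \<nu> = 0" if "\<mu> \<in> S" "\<nu> \<in> S" "\<mu> \<noteq> \<nu>" for \<mu> \<nu>
  proof -
    have "\<nu> * (ev \<mu> \<bullet> ev \<nu>) = \<mu> * (ev \<mu> \<bullet> ev \<nu>)"
      using symmetric_matrix_inner_commute[OF sym, of "ev \<mu>" "ev \<nu>"] ev that by simp
    thus ?thesis using that by simp
  qed
  have "inj_on ev S"
    by (rule inj_onI) (metis orth ev inner_eq_zero_iff)
  moreover have "independent (ev ` S)"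
    using orth ev by (intro pairwise_orthogonal_independent) (auto simp: pairwise_def orthogonal_def)
  ultimately show ?thesis
    using independent_bound finite_imageD unfolding S_def by blast
qed

lemma linear_coeff_zero_if_quadratic_nonneg:
  fixes a b :: real
  assumes "\<And>t. 0 \<le> 2 * t * a + t\<^sup>2 * b"
  shows "a = 0"
proof (rule ccontr)
  assume "a \<noteq> 0"
  define c where "c = \<bar>b\<bar> + 1"
  have c: "c > 0" unfolding c_def by simp
  define t where "t = - a / c"
  have "2 * t * a + t\<^sup>2 * b \<le> 2 * t * a + t\<^sup>2 * \<bar>b\<bar>"
    by (simp add: mult_left_mono)
  also have "\<dots> = a\<^sup>2 * (\<bar>b\<bar> - 2 * c) / c\<^sup>2"
    using c unfolding t_def by (simp add: field_simps power2_eq_square)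
  also have "\<dots> = a\<^sup>2 * (- \<bar>b\<bar> - 2) / c\<^sup>2"
    unfolding c_def by simp
  also have "\<dots> < 0"
    using \<open>a \<noteq> 0\<close> c by (intro divide_neg_pos mult_pos_neg) auto
  finally show False using assms[of t] by linarith
qed

lemma eigenvalue_exists_symmetric:
  fixes C :: "real^'k^'k"
  assumes sym: "transpose C = C"
  shows "\<exists>\<mu>. is_eigenvalue C \<mu>"
proof -
  define q where "q v = v \<bullet> (C *v v)" for v :: "real^'k"
  have "continuous_on (sphere 0 1) q"
    unfolding q_def
    by (intro continuous_intros linear_continuous_on matrix_vector_mul_linear
        linear_linear[THEN iffD1])
  then obtain v0 where v0: "norm v0 = 1" and min: "\<And>y. norm y = 1 \<Longrightarrow> q v0 \<le> q y"
    using continuous_attains_inf[OF compact_sphere, of 0 1] by fastforce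
  define l where "l = q v0"
  have q_ge: "l * (u \<bullet> u) \<le> q u" for u
  proof (cases "u = 0")
    case False
    have "l \<le> q (inverse (norm u) *\<^sub>R u)"
      using min False unfolding l_def by simp
    also have "\<dots> = q u / (u \<bullet> u)"
      by (simp add: q_def matrix_vector_mult_scaleR power2_norm_eq_inner[symmetric] field_simps
          power2_eq_square)
    finally show ?thesis using False by (simp add: field_simps)
  qed (simp add: q_def)
  \<comment> \<open>Moving the minimiser v0 along its residual r would lower the Rayleigh quotient
    unless r = 0.\<close>
  define r where "r = C *v v0 - l *\<^sub>R v0"
  have "0 \<le> 2 * t * (r \<bullet> r) + t\<^sup>2 * (q r - l * (r \<bullet> r))" for t
  proof -
    have "q (v0 + t *\<^sub>R r) - l * ((v0 + t *\<^sub>R r) \<bullet> (v0 + t *\<^sub>R r))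
        = (q v0 - l * (v0 \<bullet> v0)) + 2 * t * (r \<bullet> r) + t\<^sup>2 * (q r - l * (r \<bullet> r))"
      using symmetric_matrix_inner_commute[OF sym, of v0 r]
      by (simp add: q_def r_def matrix_vector_right_distrib matrix_vector_mult_scaleR inner_add_left
          inner_add_right inner_diff_left inner_diff_right algebra_simps power2_eq_square inner_commute)
    moreover have "q v0 - l * (v0 \<bullet> v0) = 0"
      using v0 by (simp add: l_def power2_norm_eq_inner[symmetric])
    ultimately show ?thesis using q_ge[of "v0 + t *\<^sub>R r"] by linarith
  qed
  then have "r \<bullet> r = 0" by (rule linear_coeff_zero_if_quadratic_nonneg)
  then have "C *v v0 = l *\<^sub>R v0" unfolding r_def by simp
  moreover have "v0 \<noteq> 0" using v0 by auto
  ultimately show ?thesis unfolding is_eigenvalue_def by blast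
qed

lemma lambda_min_ge_if_quadratic_form_ge:
  fixes C :: "real^'k^'k"
  assumes sym: "transpose C = C" and quad: "\<And>v. m * (v \<bullet> v) \<le> v \<bullet> (C *v v)"
  shows "m \<le> lambda_min C"
  unfolding lambda_min_def
proof (rule Min.boundedI)
  show "finite {\<mu>. is_eigenvalue C \<mu>}" using finite_eigenvalues_symmetric[OF sym] .
  show "{\<mu>. is_eigenvalue C \<mu>} \<noteq> {}" using eigenvalue_exists_symmetric[OF sym] by blast
next
  fix \<mu> assume "\<mu> \<in> {\<mu>. is_eigenvalue C \<mu>}"
  then obtain v where "v \<noteq> 0" "C *v v = \<mu> *\<^sub>R v" unfolding is_eigenvalue_def by blast
  then have "m * (v \<bullet> v) \<le> \<mu> * (v \<bullet> v)" "0 < v \<bullet> v" using quad[of v] by auto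
  then show "m \<le> \<mu>" by (rule mult_right_le_imp_le)
qed

context
  fixes S :: "'a set" and r :: "'a \<Rightarrow> real" and P :: "('a \<Rightarrow> bool) pmf"
  assumes finite_S: "finite S" and r_prob: "\<And>s. 0 \<le> r s \<and> r s \<le> 1"
  defines "P \<equiv> Pi_pmf S False (\<lambda>s. bernoulli_pmf (r s))"
begin

lemma integrable_Pi_bernoulli [simp]: "integrable (measure_pmf P) (f :: _ \<Rightarrow> real)"
  by (rule integrable_measure_pmf_finite) (auto simp: P_def set_Pi_pmf finite_S)

lemma expectation_prod_of_bool_Pi_bernoulli:
  assumes "T \<subseteq> S"
  shows "measure_pmf.expectation P (\<lambda>f. \<Prod>s\<in>T. of_bool (f s)) = (\<Prod>s\<in>T. r s)"
proof -
  have "measure_pmf.expectation P (\<lambda>f. \<Prod>s\<in>S. (\<lambda>s b. if s \<in> T then of_bool b else 1 :: real) s (f s))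
      = (\<Prod>s\<in>S. measure_pmf.expectation (bernoulli_pmf (r s)) (\<lambda>b. if s \<in> T then of_bool b else 1))"
    unfolding P_def
    by (rule expectation_prod_Pi_pmf) (auto simp: finite_S intro: integrable_measure_pmf_finite)
  also have "\<dots> = (\<Prod>s\<in>S. if s \<in> T then r s else 1)"
    using r_prob by (intro prod.cong) auto
  finally show ?thesis
    using assms finite_S by (simp add: prod.If_cases Int_absorb1)
qed

lemma expectation_of_bool_Pi_bernoulli:
  "s \<in> S \<Longrightarrow> measure_pmf.expectation P (\<lambda>f. of_bool (f s)) = r s"
  using expectation_prod_of_bool_Pi_bernoulli[of "{s}"] by simp

lemma covariance_of_bool_Pi_bernoulli:
  assumes "s \<in> S" "t \<in> S"
  shows "measure_pmf.expectation P (\<lambda>f. (of_bool (f s) - r s) * (of_bool (f t) - r t))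
       = (if s = t then r s * (1 - r s) else 0)"
proof (cases "s = t")
  case True
  have "(\<lambda>f. (of_bool (f s) - r s) * (of_bool (f s) - r s)) = (\<lambda>f. (1 - 2 * r s) * of_bool (f s) + (r s)\<^sup>2)"
    by (auto simp: fun_eq_iff algebra_simps power2_eq_square)
  then show ?thesis
    using True expectation_of_bool_Pi_bernoulli[OF assms(1)] by (simp add: algebra_simps power2_eq_square)
next
  case False
  have "(\<lambda>f. (of_bool (f s) - r s) * (of_bool (f t) - r t))
      = (\<lambda>f. (\<Prod>u\<in>{s, t}. of_bool (f u)) - r t * of_bool (f s) - r s * of_bool (f t) + r s * r t)"
    using False by (simp add: fun_eq_iff algebra_simps)
  then show ?thesis
    using False assms expectation_of_bool_Pi_bernoulli expectation_prod_of_bool_Pi_bernoulli[of "{s, t}"]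
    by simp
qed

lemma second_moment_affine_of_bool_Pi_bernoulli:
  assumes J: "finite J" and g: "inj_on g J" "g ` J \<subseteq> S"
  shows "measure_pmf.expectation P (\<lambda>f. (c + (\<Sum>j\<in>J. a j * of_bool (f (g j))))\<^sup>2)
       = (c + (\<Sum>j\<in>J. a j * r (g j)))\<^sup>2 + (\<Sum>j\<in>J. (a j)\<^sup>2 * (r (g j) * (1 - r (g j))))"
proof -
  define X where "X j = (\<lambda>f. of_bool (f (g j)) - r (g j))" for j
  define \<mu> where "\<mu> = c + (\<Sum>j\<in>J. a j * r (g j))"
  have mean: "measure_pmf.expectation P (X j) = 0" if "j \<in> J" for j
    using expectation_of_bool_Pi_bernoulli[of "g j"] g that by (auto simp: X_def)
  have cov: "(\<Sum>l\<in>J. a j * a l * measure_pmf.expectation P (\<lambda>f. X j f * X l f))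
           = (a j)\<^sup>2 * (r (g j) * (1 - r (g j)))" if "j \<in> J" for j
  proof -
    have "(\<Sum>l\<in>J. a j * a l * measure_pmf.expectation P (\<lambda>f. X j f * X l f))
        = (\<Sum>l\<in>J. if l = j then a j * a l * (r (g j) * (1 - r (g j))) else 0)"
      using that g covariance_of_bool_Pi_bernoulli
      by (intro sum.cong refl) (auto simp: X_def inj_on_eq_iff image_subset_iff)
    then show ?thesis using that J by (simp add: power2_eq_square)
  qed
  have "(c + (\<Sum>j\<in>J. a j * of_bool (f (g j))))\<^sup>2
      = \<mu>\<^sup>2 + 2 * \<mu> * (\<Sum>j\<in>J. a j * X j f) + (\<Sum>j\<in>J. \<Sum>l\<in>J. a j * a l * (X j f * X l f))" for f
  proof -
    have "c + (\<Sum>j\<in>J. a j * of_bool (f (g j))) = \<mu> + (\<Sum>j\<in>J. a j * X j f)"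
      unfolding \<mu>_def X_def by (simp add: algebra_simps sum.distrib sum_subtractf)
    then show ?thesis
      by (simp add: power2_eq_square sum_product algebra_simps)
  qed
  then have "measure_pmf.expectation P (\<lambda>f. (c + (\<Sum>j\<in>J. a j * of_bool (f (g j))))\<^sup>2)
      = \<mu>\<^sup>2 + 2 * \<mu> * (\<Sum>j\<in>J. a j * measure_pmf.expectation P (X j))
        + (\<Sum>j\<in>J. \<Sum>l\<in>J. a j * a l * measure_pmf.expectation P (\<lambda>f. X j f * X l f))"
    by (simp add: integral_sum)
  then show ?thesis
    using mean cov by (simp add: \<mu>_def)
qed

end

lemma sbm_P_nth: "sbm_P psi B $ i $ j = B $ psi i $ psi j"
  unfolding sbm_P_def matrix_matrix_mult_def memb_mat_def transpose_def
  by (simp add: of_bool_def[symmetric] Int_def)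
lemma sbm_edges_eq_Pi_bernoulli:
  "sbm_edges psi B = Pi_pmf {(i, j). i < j} False (\<lambda>s. bernoulli_pmf (B $ psi (fst s) $ psi (snd s)))"
  unfolding sbm_edges_def by (simp add: sbm_P_nth case_prod_unfold)

lemma memb_mat_mult_vec_nth: "(memb_mat psi *v v) $ i = v $ psi i"
  unfolding memb_mat_def matrix_vector_mult_def by (simp add: of_bool_def[symmetric] Int_def)
lemma M_mat_mult_vec_nth:
  "(M_mat psi x A k *v v) $ i = (if psi i = k then (\<Sum>j\<in>UNIV. x $ j * v $ psi j * A $ i $ j) else 0)"
  unfolding M_mat_def
  by (simp add: matrix_vector_mul_assoc[symmetric] memb_mat_mult_vec_nth)
     (simp add: matrix_vector_mult_def diag_vec_def hadamard_def ones_outer_def column_def memb_mat_def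
        if_distrib[of "\<lambda>z. z * _"] if_distrib[of "\<lambda>z. _ * z"] mult_ac cong: if_cong)
lemma inner_H_mat_mult_vec:
  "v \<bullet> (H_mat psi x A k *v v) = (\<Sum>i\<in>UNIV. ((M_mat psi x A k *v v) $ i)\<^sup>2)"
proof -
  have "v \<bullet> (H_mat psi x A k *v v) = (M_mat psi x A k *v v) \<bullet> (M_mat psi x A k *v v)"
    unfolding H_mat_def matrix_vector_mul_assoc[symmetric]
    by (metis dot_lmul_matrix vector_transpose_matrix)
  then show ?thesis by (simp add: inner_vec_def power2_eq_square)
qed

lemma transpose_H_mat: "transpose (H_mat psi x A k) = H_mat psi x A k"
  unfolding H_mat_def by (simp add: matrix_transpose_mul)

lemma inner_mat_expectation_mult_vec:
  fixes p :: "'a::finite pmf" and F :: "'a \<Rightarrow> real^'k^'k"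
  shows "v \<bullet> (mat_expectation p F *v v) = measure_pmf.expectation p (\<lambda>\<omega>. v \<bullet> (F \<omega> *v v))"
  by (simp add: inner_vec_def matrix_vector_mult_def mat_expectation_def integral_sum
       sum_distrib_left algebra_simps integrable_measure_pmf_finite)

lemma transpose_mat_expectation:
  "transpose (mat_expectation p F) = mat_expectation p (\<lambda>\<omega>. transpose (F \<omega>))"
  by (simp add: mat_expectation_def transpose_def)

lemma sum_sum_diff_singleton_ge:
  fixes w :: "'a \<Rightarrow> real"
  assumes "finite U" "I \<subseteq> U" and w_nonneg: "\<And>j. j \<in> U \<Longrightarrow> 0 \<le> w j"
  shows "(real (card I) - 1) * (\<Sum>j\<in>U. w j) \<le> (\<Sum>i\<in>I. \<Sum>j\<in>U - {i}. w j)"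
proof -
  have fin_I: "finite I" using assms finite_subset by blast
  have "(\<Sum>i\<in>I. \<Sum>j\<in>U - {i}. w j) = real (card I) * (\<Sum>j\<in>U. w j) - (\<Sum>i\<in>I. w i)"
    using assms fin_I by (simp add: sum_diff1 subsetD sum_subtractf)
  moreover have "(\<Sum>i\<in>I. w i) \<le> (\<Sum>j\<in>U. w j)"
    using assms by (intro sum_mono2) auto
  ultimately show ?thesis by (simp add: algebra_simps)
qed

lemma sum_by_community_norm_comm_restrict:
  fixes psi :: "'n::finite \<Rightarrow> 'k::finite"
  shows "(\<Sum>j\<in>UNIV. f (psi j) * (x $ j)\<^sup>2) = (\<Sum>c\<in>UNIV. f c * (norm (comm_restrict psi c x))\<^sup>2)"
proof -
  have "(norm (comm_restrict psi c x))\<^sup>2 = (\<Sum>j\<in>UNIV. if psi j = c then (x $ j)\<^sup>2 else 0)" for c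
    unfolding power2_norm_eq_inner inner_vec_def comm_restrict_def
    by (intro sum.cong) (auto simp: power2_eq_square)
  then have "(norm (comm_restrict psi c x))\<^sup>2 = (\<Sum>j\<in>{j. psi j = c}. (x $ j)\<^sup>2)" for c
    by (simp add: sum.If_cases)
  then have "(\<Sum>c\<in>UNIV. f c * (norm (comm_restrict psi c x))\<^sup>2)
           = (\<Sum>c\<in>UNIV. \<Sum>j\<in>{j. psi j = c}. f (psi j) * (x $ j)\<^sup>2)"
    by (simp add: sum_distrib_left)
  also have "\<dots> = (\<Sum>j\<in>UNIV. f (psi j) * (x $ j)\<^sup>2)"
    using sum.group[of UNIV UNIV psi "\<lambda>j. f (psi j) * (x $ j)\<^sup>2"] by simp
  finally show ?thesis ..
qed

lemma expectation_M_mat_row_sq_ge: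
  fixes psi :: "'n::{finite,linorder} \<Rightarrow> 'k::finite"
  assumes B_sym: "transpose B = B" and B_range: "\<And>a b. 0 \<le> B $ a $ b \<and> B $ a $ b \<le> 1"
    and i: "psi i = k"
  shows "(\<Sum>j\<in>UNIV - {i}. (x $ j * v $ psi j)\<^sup>2 * (B $ psi j $ k * (1 - B $ psi j $ k)))
       \<le> measure_pmf.expectation (sbm_edges psi B) (\<lambda>e. ((M_mat psi x (adj_of e) k *v v) $ i)\<^sup>2)"
proof -
  define a where "a j = x $ j * v $ psi j" for j
  define edge where "edge j = (if i < j then (i, j) else (j, i))" for j
  define r where "r s = B $ psi (fst s) $ psi (snd s)" for s :: "'n \<times> 'n"
  have row: "(M_mat psi x (adj_of e) k *v v) $ i = a i + (\<Sum>j\<in>UNIV - {i}. a j * of_bool (e (edge j)))"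
    for e
  proof -
    have "(M_mat psi x (adj_of e) k *v v) $ i = (\<Sum>j\<in>UNIV. a j * adj_of e $ i $ j)"
      using i by (simp add: M_mat_mult_vec_nth a_def)
    also have "\<dots> = a i * adj_of e $ i $ i + (\<Sum>j\<in>UNIV - {i}. a j * adj_of e $ i $ j)"
      by (simp add: sum.remove)
    also have "\<dots> = a i + (\<Sum>j\<in>UNIV - {i}. a j * of_bool (e (edge j)))"
      by (intro arg_cong2[where f = "(+)"] sum.cong) (auto simp: adj_of_def edge_def)
    finally show ?thesis .
  qed
  have edge_inj: "inj_on edge (UNIV - {i})"
    unfolding edge_def by (rule inj_onI) (auto split: if_splits)
  have edge_upper: "edge ` (UNIV - {i}) \<subseteq> {(i, j). i < j}"
    unfolding edge_def by auto
  have r_edge: "r (edge j) = B $ psi j $ k" for j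
    using B_sym i unfolding r_def edge_def by (auto simp: transpose_def vec_eq_iff)
  have "measure_pmf.expectation (sbm_edges psi B) (\<lambda>e. ((M_mat psi x (adj_of e) k *v v) $ i)\<^sup>2)
      = (a i + (\<Sum>j\<in>UNIV - {i}. a j * r (edge j)))\<^sup>2
        + (\<Sum>j\<in>UNIV - {i}. (a j)\<^sup>2 * (r (edge j) * (1 - r (edge j))))"
    unfolding row sbm_edges_eq_Pi_bernoulli
    using second_moment_affine_of_bool_Pi_bernoulli[OF _ _ _ edge_inj edge_upper, of r] B_range
    by (simp add: r_def)
  then show ?thesis by (simp add: r_edge a_def)
qed

lemma quadratic_form_expected_H_mat_ge:
  fixes psi :: "'n::{finite,linorder} \<Rightarrow> 'k::finite"
  assumes B_sym: "transpose B = B" and B_range: "\<And>a b. 0 \<le> B $ a $ b \<and> B $ a $ b \<le> 1"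
  shows "(\<Sum>c\<in>UNIV. (v $ c)\<^sup>2 * (B $ c $ k * (1 - B $ c $ k) * (real (comm_size psi k) - 1)
                                   * (norm (comm_restrict psi c x))\<^sup>2))
       \<le> v \<bullet> (mat_expectation (sbm_edges psi B) (\<lambda>e. H_mat psi x (adj_of e) k) *v v)"
proof -
  define w where "w j = (x $ j * v $ psi j)\<^sup>2 * (B $ psi j $ k * (1 - B $ psi j $ k))" for j
  define E where "E i = measure_pmf.expectation (sbm_edges psi B)
                          (\<lambda>e. ((M_mat psi x (adj_of e) k *v v) $ i)\<^sup>2)" for i
  have w_nonneg: "0 \<le> w j" for j
    using B_range[of "psi j" k] by (simp add: w_def)
  have "(\<Sum>c\<in>UNIV. (v $ c)\<^sup>2 * (B $ c $ k * (1 - B $ c $ k) * (real (comm_size psi k) - 1)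
                                   * (norm (comm_restrict psi c x))\<^sup>2))
      = (real (card {i. psi i = k}) - 1) * (\<Sum>j\<in>UNIV. w j)"
    using sum_by_community_norm_comm_restrict[of "\<lambda>c. (v $ c)\<^sup>2 * (B $ c $ k * (1 - B $ c $ k))" psi x]
    by (simp add: w_def comm_size_def sum_distrib_left power_mult_distrib mult_ac)
  also have "\<dots> \<le> (\<Sum>i\<in>{i. psi i = k}. \<Sum>j\<in>UNIV - {i}. w j)"
    using w_nonneg by (intro sum_sum_diff_singleton_ge) auto
  also have "\<dots> \<le> (\<Sum>i\<in>{i. psi i = k}. E i)"
    unfolding E_def w_def using B_sym B_range
    by (intro sum_mono expectation_M_mat_row_sq_ge) auto
  also have "\<dots> \<le> (\<Sum>i\<in>UNIV. E i)"
    unfolding E_def by (intro sum_mono2) auto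
  also have "\<dots> = v \<bullet> (mat_expectation (sbm_edges psi B) (\<lambda>e. H_mat psi x (adj_of e) k) *v v)"
    by (simp add: E_def inner_mat_expectation_mult_vec inner_H_mat_mult_vec integral_sum
        integrable_measure_pmf_finite)
  finally show ?thesis .
qed

theorem mainTheorem3:
  fixes psi :: "'n::{finite,linorder} \<Rightarrow> 'k::finite"
    and B :: "real^'k^'k" and x :: "(real, 'n) vec" and k :: 'k
  assumes n2: "CARD('n) \<ge> 2"
    and nonempty: "\<And>k'. comm_size psi k' \<ge> 1"
    and B_sym: "transpose B = B"
    and B_range: "\<And>a b. 0 \<le> B $ a $ b \<and> B $ a $ b \<le> 1"
  shows "lambda_min (mat_expectation (sbm_edges psi B) (\<lambda>e. H_mat psi x (adj_of e) k))
         \<ge> Min (range (\<lambda>k'. B $ k' $ k * (1 - B $ k' $ k) * (real (comm_size psi k) - 1)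
                   * (norm (comm_restrict psi k' x))\<^sup>2))"
proof (rule lambda_min_ge_if_quadratic_form_ge)
  define t where "t k' = B $ k' $ k * (1 - B $ k' $ k) * (real (comm_size psi k) - 1)
                   * (norm (comm_restrict psi k' x))\<^sup>2" for k'
  show "transpose (mat_expectation (sbm_edges psi B) (\<lambda>e. H_mat psi x (adj_of e) k))
      = mat_expectation (sbm_edges psi B) (\<lambda>e. H_mat psi x (adj_of e) k)"
    by (simp add: transpose_mat_expectation transpose_H_mat)
  fix v :: "real^'k"
  have "Min (range t) * (v \<bullet> v) = (\<Sum>c\<in>UNIV. (v $ c)\<^sup>2 * Min (range t))"
    by (simp add: inner_vec_def sum_distrib_left power2_eq_square mult_ac)
  also have "\<dots> \<le> (\<Sum>c\<in>UNIV. (v $ c)\<^sup>2 * t c)"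
    by (intro sum_mono mult_left_mono Min_le) auto
  also have "\<dots> \<le> v \<bullet> (mat_expectation (sbm_edges psi B) (\<lambda>e. H_mat psi x (adj_of e) k) *v v)"
    unfolding t_def using B_sym B_range by (rule quadratic_form_expected_H_mat_ge)
  finally show "Min (range t) * (v \<bullet> v) \<le> \<dots>" .
qed

end
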